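(* Let $\mathbb{R}^m$ be endowed with a norm $\|\cdot\|$. Let $\bar A\in\mathbb{R}^{(m+1)\times n}$ have at least two different columns and let $v\in\mathbb{R}^m$. Then for all $\bar u\in F(v)$ and all $x\in\Delta_{n-1}$, \[ \min\{\|x-z\|_1: z\in\Delta_{n-1},\ \bar Az=\bar u\}\le\frac{2\|\bar Ax-\bar u\|_v}{\Phi_v(\bar A)}. \]
   Context: $\Delta_{n-1}=\{x\in\mathbb{R}^n_+:\sum_ix_i=1\}$. A matrix is identified with the set of its columns; $\mathrm{conv}(\bar A)=\{\bar Ax:x\in\Delta_{n-1}\}$. For $\bar w=(w,w_{m+1})\in\mathbb{R}^{m+1}$, $\|\bar w\|_v=\sqrt{\|w\|^2+|\langle v,w\rangle+w_{m+1}|}$; for nonempty $F,G\subseteq\mathbb{R}^{m+1}$, $\mathrm{dist}_v(F,G)=\min_{\bar w\in F,\bar w'\in G}\|\bar w-\bar w'\|_v$. $F(v)=\operatorname{Argmin}_{\bar w\in\mathrm{conv}(\bar A)}\langle(v,1),\bar w\rangle$, a face of $\mathrm{conv}(\bar A)$. The local facial distance is $\Phi_v(\bar A)=\min\{\mathrm{dist}_v(G,\mathrm{conv}(\bar A\setminus G)):G\text{ a face of }F(v),\ \emptyset\ne G\ne\mathrm{conv}(\bar A)\}$, where $\bar A\setminus G$ denotes the columns of $\bar A$ not in $G$. *)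

theory Defs
  imports "HOL-Analysis.Analysis"
begin

definition is_norm :: "('a::real_vector \<Rightarrow> real) \<Rightarrow> bool" where
  "is_norm N \<longleftrightarrow> (\<forall>x. 0 \<le> N x) \<and> (\<forall>x. N x = 0 \<longleftrightarrow> x = 0)
     \<and> (\<forall>c x. N (c *\<^sub>R x) = \<bar>c\<bar> * N x) \<and> (\<forall>x y. N (x + y) \<le> N x + N y)"

definition std_simplex :: "('n::finite \<Rightarrow> real) set" where
  "std_simplex = {x. (\<forall>i. 0 \<le> x i) \<and> sum x UNIV = 1}"

text \<open>Matrix with columns A j in R^{m+1} = R^m x R, times vector x.\<close>
definition matvec :: "('n::finite \<Rightarrow> (real^'m::finite) \<times> real) \<Rightarrow> ('n \<Rightarrow> real) \<Rightarrow> (real^'m::finite) \<times> real" where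
  "matvec A x = (\<Sum>i\<in>UNIV. x i *\<^sub>R A i)"

definition conv_mat :: "('n::finite \<Rightarrow> (real^'m::finite) \<times> real) \<Rightarrow> ((real^'m::finite) \<times> real) set" where
  "conv_mat A = convex hull (range A)"

definition normv :: "(real^'m::finite \<Rightarrow> real) \<Rightarrow> real^'m \<Rightarrow> (real^'m::finite) \<times> real \<Rightarrow> real" where
  "normv N v wb = sqrt ((N (fst wb))\<^sup>2 + \<bar>v \<bullet> fst wb + snd wb\<bar>)"

definition dist_v :: "(real^'m::finite \<Rightarrow> real) \<Rightarrow> real^'m \<Rightarrow> ((real^'m::finite) \<times> real) set \<Rightarrow> ((real^'m::finite) \<times> real) set \<Rightarrow> real" where
  "dist_v N v F G = Inf {normv N v (p - q) | p q. p \<in> F \<and> q \<in> G}"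

definition Fv :: "('n::finite \<Rightarrow> (real^'m::finite) \<times> real) \<Rightarrow> real^'m \<Rightarrow> ((real^'m::finite) \<times> real) set" where
  "Fv A v = {w \<in> conv_mat A. \<forall>w'\<in>conv_mat A. (v, 1) \<bullet> w \<le> (v, 1) \<bullet> w'}"

definition Phi :: "(real^'m::finite \<Rightarrow> real) \<Rightarrow> real^'m \<Rightarrow> ('n::finite \<Rightarrow> (real^'m::finite) \<times> real) \<Rightarrow> real" where
  "Phi N v A = Inf {dist_v N v G (convex hull (A ` {j. A j \<notin> G})) | G.
      G face_of Fv A v \<and> G \<noteq> {} \<and> G \<noteq> conv_mat A}"

end

(*
  Choose z in the fibre {z in Delta. A z = u} nearest to x in the l1 norm and split
  x = M + t p, z = M + t q with p, q in Delta, so that |x - z|_1 = 2 t and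
  A x - u = t (A p - A q).  Since u lies in the face F(v), so does A q; let G be the face
  of F(v) having A q in its relative interior.  If some column A_i with p_i > 0 lay in G,
  then A q would be a convex combination of a point of G and A_i with positive weight d
  on A_i, and moving mass t d of z onto coordinate i would give a point of the fibre
  strictly closer to x.  Hence A p lies in the convex hull of the columns outside G, so
  Phi_v <= |A p - A q|_v, while t |A p - A q|_v <= |t (A p - A q)|_v = |A x - u|_v
  because t <= 1.
*)

theory Submission
  imports Defs
begin

lemma matvec_add: "matvec A (\<lambda>i. f i + g i) = matvec A f + matvec A g"
  by (simp add: matvec_def scaleR_add_left sum.distrib)

lemma matvec_scale: "matvec A (\<lambda>i. c * f i) = c *\<^sub>R matvec A f"
  by (simp add: matvec_def scaleR_sum_right)

lemma matvec_indicator: "matvec A (\<lambda>j. if j = i then 1 else 0) = A i"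
proof -
  have "matvec A (\<lambda>j. if j = i then 1 else 0) = (\<Sum>j\<in>UNIV. if j = i then A j else 0)"
    unfolding matvec_def by (rule sum.cong) auto
  then show ?thesis by simp
qed

lemma inner_matvec: "c \<bullet> matvec A r = (\<Sum>i\<in>UNIV. r i * (c \<bullet> A i))"
  by (simp add: matvec_def inner_sum_right)

lemma indicator_in_std_simplex: "(\<lambda>j. if j = i then 1 else 0) \<in> std_simplex"
  by (simp add: std_simplex_def)

lemma std_simplex_le_1: "r \<in> std_simplex \<Longrightarrow> r i \<le> 1"
  unfolding std_simplex_def using member_le_sum[of i UNIV r] by auto

lemma matvec_in_convex:
  assumes C: "convex C" and r: "r \<in> std_simplex" and cols: "\<And>j. 0 < r j \<Longrightarrow> A j \<in> C"
  shows "matvec A r \<in> C"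
proof -
  let ?J = "{j. 0 < r j}"
  have r0: "r j = 0" if "j \<in> UNIV - ?J" for j
    using r that by (auto simp: std_simplex_def intro: order_antisym)
  have "matvec A r = (\<Sum>j\<in>?J. r j *\<^sub>R A j)"
    unfolding matvec_def
    by (rule sum.mono_neutral_right[OF finite subset_UNIV], rule ballI, subst r0) auto
  also have "\<dots> \<in> C"
  proof (rule convex_sum[OF _ C])
    have "sum r ?J = sum r UNIV"
      by (rule sum.mono_neutral_left[OF finite subset_UNIV], rule ballI, rule r0)
    then show "sum r ?J = 1" using r by (simp add: std_simplex_def)
  qed (simp_all add: cols less_imp_le)
  finally show ?thesis .
qed

lemma conv_mat_eq_image: "conv_mat A = matvec A ` std_simplex"
proof
  show "matvec A ` std_simplex \<subseteq> conv_mat A"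
    unfolding conv_mat_def
    by (intro image_subsetI matvec_in_convex convex_convex_hull hull_inc) auto
  have "range A \<subseteq> matvec A ` std_simplex"
  proof (rule image_subsetI)
    show "A i \<in> matvec A ` std_simplex" for i
      using indicator_in_std_simplex by (rule rev_image_eqI) (simp add: matvec_indicator)
  qed
  moreover have "convex (matvec A ` std_simplex)"
  proof (rule convexI)
    fix a b :: real and r s
    assume "r \<in> matvec A ` std_simplex" "s \<in> matvec A ` std_simplex"
      and ab: "0 \<le> a" "0 \<le> b" "a + b = 1"
    then obtain r' s' where r': "r' \<in> std_simplex" "r = matvec A r'"
      and s': "s' \<in> std_simplex" "s = matvec A s'" by blast
    have "(\<lambda>i. a * r' i + b * s' i) \<in> std_simplex"
      using r' s' ab by (simp add: std_simplex_def sum.distrib flip: sum_distrib_left)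
    then show "a *\<^sub>R r + b *\<^sub>R s \<in> matvec A ` std_simplex"
      by (rule rev_image_eqI) (simp add: matvec_add matvec_scale r' s')
  qed
  ultimately show "conv_mat A \<subseteq> matvec A ` std_simplex"
    unfolding conv_mat_def by (rule hull_minimal)
qed

lemma is_norm_nonneg: "is_norm N \<Longrightarrow> 0 \<le> N x"
  by (simp add: is_norm_def)

lemma is_norm_eq_0_iff: "is_norm N \<Longrightarrow> N x = 0 \<longleftrightarrow> x = 0"
  by (simp add: is_norm_def)

lemma is_norm_scale: "is_norm N \<Longrightarrow> N (c *\<^sub>R x) = \<bar>c\<bar> * N x"
  by (simp add: is_norm_def)

lemma is_norm_triangle: "is_norm N \<Longrightarrow> N (x + y) \<le> N x + N y"
  by (simp add: is_norm_def)

lemma is_norm_minus: "is_norm N \<Longrightarrow> N (- x) = N x"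
  using is_norm_scale[of N "-1" x] by simp

lemma is_norm_convex_on: "is_norm N \<Longrightarrow> convex_on UNIV N"
proof (rule convex_onI)
  fix t :: real and x y
  assume N: "is_norm N" and t: "0 < t" "t < 1"
  have "N ((1 - t) *\<^sub>R x + t *\<^sub>R y) \<le> N ((1 - t) *\<^sub>R x) + N (t *\<^sub>R y)"
    using N by (rule is_norm_triangle)
  also have "\<dots> = \<bar>1 - t\<bar> * N x + \<bar>t\<bar> * N y"
    using N by (simp add: is_norm_scale)
  finally show "N ((1 - t) *\<^sub>R x + t *\<^sub>R y) \<le> (1 - t) * N x + t * N y"
    using t by simp
qed simp

lemma is_norm_continuous_on:
  fixes N :: "'a::euclidean_space \<Rightarrow> real"
  assumes "is_norm N"
  shows "continuous_on S N"
  using convex_on_continuous[OF open_UNIV is_norm_convex_on[OF assms]]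
  by (rule continuous_on_subset) simp

lemma normv_nonneg: "0 \<le> normv N v w"
  by (simp add: normv_def)

lemma normv_zero: "is_norm N \<Longrightarrow> normv N v 0 = 0"
  by (simp add: normv_def is_norm_eq_0_iff)

lemma normv_minus: "is_norm N \<Longrightarrow> normv N v (- w) = normv N v w"
  by (simp add: normv_def is_norm_minus abs_minus_commute inner_minus_right)

lemma normv_pos:
  assumes N: "is_norm N" and "w \<noteq> 0"
  shows "0 < normv N v w"
proof (cases "fst w = 0")
  case True
  then have "snd w \<noteq> 0" using \<open>w \<noteq> 0\<close> by (simp add: prod_eq_iff)
  then show ?thesis using True by (simp add: normv_def add_nonneg_pos)
next
  case False
  then have "0 < N (fst w)"
    using is_norm_eq_0_iff[OF N] is_norm_nonneg[OF N] by (simp add: order_less_le)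
  then show ?thesis by (simp add: normv_def add_pos_nonneg)
qed

text \<open>Under the square root the second summand scales linearly rather than quadratically,
  so shrinking by a factor \<open>t \<le> 1\<close> shrinks \<open>normv\<close> by at most \<open>t\<close>.\<close>
lemma mult_normv_le_normv_scale:
  assumes N: "is_norm N" and t: "0 \<le> t" "t \<le> 1"
  shows "t * normv N v w \<le> normv N v (t *\<^sub>R w)"
proof -
  let ?a = "(N (fst w))\<^sup>2" and ?b = "\<bar>v \<bullet> fst w + snd w\<bar>"
  have a: "(N (fst (t *\<^sub>R w)))\<^sup>2 = t\<^sup>2 * ?a"
    using is_norm_scale[OF N, of t "fst w"] t by (simp add: power_mult_distrib)
  have "v \<bullet> fst (t *\<^sub>R w) + snd (t *\<^sub>R w) = t * (v \<bullet> fst w + snd w)"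
    by (simp add: inner_scaleR_right algebra_simps)
  then have b: "\<bar>v \<bullet> fst (t *\<^sub>R w) + snd (t *\<^sub>R w)\<bar> = t * ?b"
    using t by (simp add: abs_mult)
  have "t\<^sup>2 \<le> t"
    using t mult_left_le[of t t] by (simp add: power2_eq_square)
  then have "t\<^sup>2 * (?a + ?b) \<le> t\<^sup>2 * ?a + t * ?b"
    by (simp add: distrib_left mult_right_mono)
  then have "sqrt (t\<^sup>2 * (?a + ?b)) \<le> sqrt (t\<^sup>2 * ?a + t * ?b)"
    by (rule real_sqrt_le_mono)
  moreover have "sqrt (t\<^sup>2 * (?a + ?b)) = t * sqrt (?a + ?b)"
    using t by (simp add: real_sqrt_mult)
  ultimately show ?thesis
    unfolding normv_def a b by simp
qed

lemma continuous_on_normv: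
  fixes N :: "real^'m::finite \<Rightarrow> real"
  assumes "is_norm N"
  shows "continuous_on S (normv N v)"
proof -
  have "continuous_on S (\<lambda>w. N (fst w))"
    by (rule continuous_on_compose2[OF is_norm_continuous_on[OF assms, of UNIV]])
      (auto intro: continuous_intros)
  then show ?thesis
    unfolding normv_def by (intro continuous_intros)
qed

lemma dist_v_le:
  assumes "p \<in> F" "q \<in> G"
  shows "dist_v N v F G \<le> normv N v (p - q)"
  unfolding dist_v_def
proof (rule cInf_lower)
  show "normv N v (p - q) \<in> {normv N v (p - q) |p q. p \<in> F \<and> q \<in> G}"
    using assms by blast
  show "bdd_below {normv N v (p - q) |p q. p \<in> F \<and> q \<in> G}"
    by (rule bdd_belowI[where m=0]) (auto simp: normv_nonneg)
qed

lemma dist_v_pos: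
  fixes N :: "real^'m::finite \<Rightarrow> real"
  assumes N: "is_norm N" and F: "compact F" "F \<noteq> {}" and G: "compact G" "G \<noteq> {}"
    and disj: "F \<inter> G = {}"
  shows "0 < dist_v N v F G"
proof -
  let ?D = "{p - q | p q. p \<in> F \<and> q \<in> G}"
  have "compact ?D" by (rule compact_differences[OF F(1) G(1)])
  moreover have "?D \<noteq> {}" using F G by blast
  ultimately obtain w where w: "w \<in> ?D" and min: "\<And>w'. w' \<in> ?D \<Longrightarrow> normv N v w \<le> normv N v w'"
    using continuous_attains_inf[OF _ _ continuous_on_normv[OF N]] by meson
  have "w \<noteq> 0"
  proof
    assume "w = 0"
    obtain p q where "w = p - q" "p \<in> F" "q \<in> G" using w by blast
    then show False using \<open>w = 0\<close> disj by auto
  qed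
  have "{normv N v (p - q) | p q. p \<in> F \<and> q \<in> G} = normv N v ` ?D" by blast
  also have "Inf \<dots> = normv N v w"
    using w min by (intro cInf_eq_minimum) blast+
  finally show ?thesis
    using normv_pos[OF N \<open>w \<noteq> 0\<close>] by (simp add: dist_v_def)
qed

lemma polytope_conv_mat: "polytope (conv_mat A)"
  unfolding polytope_def conv_mat_def by (intro exI[of _ "range A"]) simp

lemma Fv_face_of_conv_mat: "Fv A v face_of conv_mat A"
proof (cases "Fv A v = {}")
  case False
  then obtain u where u: "u \<in> Fv A v" by blast
  then have "Fv A v = conv_mat A \<inter> {w. (v, 1) \<bullet> w = (v, 1) \<bullet> u}"
    unfolding Fv_def by (auto intro: order_antisym)
  also have "\<dots> face_of conv_mat A"
    using u unfolding Fv_def conv_mat_def by (intro face_of_Int_supporting_hyperplane_ge) auto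
  finally show ?thesis .
qed (simp add: empty_face_of)

lemma polytope_Fv: "polytope (Fv A v)"
  by (rule face_of_polytope_polytope[OF polytope_conv_mat Fv_face_of_conv_mat])

lemma column_in_conv_mat: "A j \<in> conv_mat A"
  unfolding conv_mat_def by (rule hull_inc) simp

lemma Fv_support_columns:
  assumes u: "u \<in> Fv A v" and z: "z \<in> std_simplex" "matvec A z = u" and "0 < z i"
  shows "A i \<in> Fv A v"
proof -
  let ?c = "(v, 1::real)"
  have ge: "?c \<bullet> u \<le> ?c \<bullet> A j" for j
    using u column_in_conv_mat unfolding Fv_def by blast
  have "(\<Sum>j\<in>UNIV. z j * (?c \<bullet> A j - ?c \<bullet> u)) = ?c \<bullet> matvec A z - sum z UNIV * (?c \<bullet> u)"
    by (simp add: inner_matvec right_diff_distrib sum_subtractf sum_distrib_right)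
  also have "\<dots> = 0"
    using z by (simp add: std_simplex_def)
  finally have "z i * (?c \<bullet> A i - ?c \<bullet> u) = 0"
    using z ge by (subst (asm) sum_nonneg_eq_0_iff) (auto simp: std_simplex_def)
  then have "?c \<bullet> A i = ?c \<bullet> u"
    using \<open>0 < z i\<close> by simp
  then show ?thesis
    using u column_in_conv_mat unfolding Fv_def by auto
qed

lemma face_of_conv_mat_disjoint_hull_outside:
  assumes G: "G face_of conv_mat A"
  shows "G \<inter> convex hull (A ` {j. A j \<notin> G}) = {}"
proof (rule ccontr)
  let ?K = "A ` {j. A j \<notin> G}"
  assume meet: "G \<inter> convex hull ?K \<noteq> {}"
  have "conv_mat A \<inter> convex hull ?K = convex hull ?K"
    unfolding conv_mat_def using hull_mono[of ?K "range A"] by blast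
  then have "G \<inter> convex hull ?K face_of convex hull ?K"
    using face_of_Int_Int[OF G face_of_refl[OF convex_convex_hull, of ?K]] by simp
  then obtain K' where K': "K' \<subseteq> ?K" "G \<inter> convex hull ?K = convex hull K'"
    using face_of_convex_hull_subset[OF finite_imp_compact] by (metis finite finite_imageI)
  then obtain k where "k \<in> K'"
    using meet by fastforce
  then show False
    using K' hull_inc[of k K'] by blast
qed

lemma face_of_conv_mat_proper_column_outside:
  assumes "G face_of conv_mat A" "G \<noteq> conv_mat A"
  obtains j where "A j \<notin> G"
proof -
  have "\<not> range A \<subseteq> G"
    using assms hull_minimal[of "range A" G convex] face_of_imp_subset face_of_imp_convex
    unfolding conv_mat_def by blast
  then show thesis using that by blast
qed

lemma Phi_pos_le_dist_v:
  fixes A :: "'n::finite \<Rightarrow> (real^'m::finite) \<times> real"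
  assumes N: "is_norm N" and G: "G face_of Fv A v" "G \<noteq> {}" "G \<noteq> conv_mat A"
  shows "0 < Phi N v A" and "Phi N v A \<le> dist_v N v G (convex hull (A ` {j. A j \<notin> G}))"
proof -
  define d where "d G = dist_v N v G (convex hull (A ` {j. A j \<notin> G}))" for G
  let ?S = "{d G | G. G face_of Fv A v \<and> G \<noteq> {} \<and> G \<noteq> conv_mat A}"
  have Phi: "Phi N v A = Inf ?S"
    unfolding Phi_def d_def ..
  have pos: "0 < d G'" if G': "G' face_of Fv A v" "G' \<noteq> {}" "G' \<noteq> conv_mat A" for G'
  proof -
    have G'C: "G' face_of conv_mat A"
      using face_of_trans[OF G'(1) Fv_face_of_conv_mat] .
    obtain j where "A j \<notin> G'"
      using face_of_conv_mat_proper_column_outside[OF G'C G'(3)] .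
    then have "convex hull (A ` {j. A j \<notin> G'}) \<noteq> {}" by auto
    moreover have "compact G'"
      using face_of_polytope_polytope[OF polytope_Fv G'(1)] by (rule polytope_imp_compact)
    moreover have "compact (convex hull (A ` {j. A j \<notin> G'}))"
      by (intro compact_convex_hull finite_imp_compact) simp
    ultimately show ?thesis
      unfolding d_def using face_of_conv_mat_disjoint_hull_outside[OF G'C] G'(2)
      by (intro dist_v_pos[OF N]) auto
  qed
  have "?S \<subseteq> d ` {G. G face_of Fv A v}" by blast
  then have fin: "finite ?S"
    using finite_imageI[OF finite_polytope_faces[OF polytope_Fv[of A v]], of d]
    by (rule finite_subset)
  have mem: "d G \<in> ?S" using G by blast
  have pos': "\<forall>x\<in>?S. 0 < x" using pos by blast
  show "0 < Phi N v A"
    unfolding Phi using finite_less_Inf_iff[OF fin] mem pos' by blast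
  show "Phi N v A \<le> d G"
    unfolding Phi using pos' by (intro cInf_lower[OF mem] bdd_belowI[where m=0]) (simp add: less_imp_le)
qed

lemma polytope_point_in_rel_interior_face:
  fixes S :: "'a::euclidean_space set"
  assumes S: "polytope S" and w: "w \<in> S"
  obtains F where "F face_of S" "w \<in> rel_interior F"
proof -
  define F where "F = \<Inter> {F. F face_of S \<and> w \<in> F}"
  have "S face_of S"
    using face_of_refl[OF polytope_imp_convex[OF S]] .
  then have F: "F face_of S"
    unfolding F_def using w by (intro face_of_Inter) auto
  have "w \<in> F" unfolding F_def by blast
  have "polyhedron F"
    using face_of_polytope_polytope[OF S F] by (rule polytope_imp_polyhedron)
  have "w \<in> rel_interior F"
  proof (rule ccontr)
    assume "w \<notin> rel_interior F"
    then have "w \<in> rel_frontier F"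
      using \<open>w \<in> F\<close> \<open>polyhedron F\<close> by (simp add: rel_frontier_def polyhedron_imp_closed)
    then obtain F' where F': "F' face_of F" "F' \<noteq> F" "w \<in> F'"
      unfolding rel_frontier_of_polyhedron_alt[OF \<open>polyhedron F\<close>] by blast
    then have "F \<subseteq> F'"
      unfolding F_def using face_of_trans[OF F'(1) F] by blast
    then show False
      using face_of_imp_subset[OF F'(1)] F'(2) by blast
  qed
  then show thesis using that F by blast
qed

lemma rel_interior_as_convex_combination:
  fixes S :: "'a::euclidean_space set"
  assumes S: "convex S" and w: "w \<in> rel_interior S" and a: "a \<in> S" and "0 < \<epsilon>"
  obtains y d where "y \<in> S" "0 < d" "d \<le> \<epsilon>" "w = (1 - d) *\<^sub>R y + d *\<^sub>R a"
proof -
  obtain m where "1 < m" and beyond: "\<And>e. 1 < e \<Longrightarrow> e \<le> m \<Longrightarrow> (1 - e) *\<^sub>R a + e *\<^sub>R w \<in> S"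
    using convex_rel_interior_if[OF S w] hull_inc[OF a] by meson
  define e where "e = min m (1 + \<epsilon>)"
  have e: "1 < e" "e \<le> m" "e \<le> 1 + \<epsilon>"
    using \<open>1 < m\<close> \<open>0 < \<epsilon>\<close> by (auto simp: e_def)
  show thesis
  proof (rule that)
    show "(1 - e) *\<^sub>R a + e *\<^sub>R w \<in> S" using beyond e by blast
    show "0 < 1 - 1 / e" using e by simp
    have "1 - 1 / e = (e - 1) / e"
      using e by (simp add: field_simps)
    also have "\<dots> \<le> e - 1"
      using e by (simp add: divide_le_eq)
    finally show "1 - 1 / e \<le> \<epsilon>" using e by simp
    show "w = (1 - (1 - 1 / e)) *\<^sub>R ((1 - e) *\<^sub>R a + e *\<^sub>R w) + (1 - 1 / e) *\<^sub>R a"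
      using e by (simp add: algebra_simps)
  qed
qed

lemma exists_l1_nearest_preimage:
  fixes A :: "'n::finite \<Rightarrow> (real^'m::finite) \<times> real" and x :: "'n \<Rightarrow> real"
  assumes "z0 \<in> std_simplex" "matvec A z0 = u"
  obtains z where "z \<in> std_simplex" "matvec A z = u"
    "\<And>z'. z' \<in> std_simplex \<Longrightarrow> matvec A z' = u \<Longrightarrow>
       (\<Sum>i\<in>UNIV. \<bar>x i - z i\<bar>) \<le> (\<Sum>i\<in>UNIV. \<bar>x i - z' i\<bar>)"
proof -
  define K where "K = {w :: real^'n. (\<forall>i. 0 \<le> w$i) \<and> (\<Sum>i\<in>UNIV. w$i) = 1
                                   \<and> (\<Sum>i\<in>UNIV. w$i *\<^sub>R A i) = u}"
  have memK: "(\<chi> i. z i) \<in> K \<longleftrightarrow> z \<in> std_simplex \<and> matvec A z = u" for z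
    unfolding K_def std_simplex_def matvec_def by simp
  have "closed K"
    unfolding K_def
    by (intro closed_Collect_conj closed_Collect_all closed_Collect_le closed_Collect_eq
        continuous_intros)
  moreover have "bounded K"
    unfolding bounded_iff
  proof (intro exI ballI)
    fix w assume w: "w \<in> K"
    have "norm w \<le> (\<Sum>i\<in>UNIV. \<bar>w$i\<bar>)" by (rule norm_le_l1_cart)
    also have "\<dots> = 1" using w unfolding K_def by simp
    finally show "norm w \<le> 1" .
  qed
  ultimately have "compact K" by (simp add: compact_eq_bounded_closed)
  moreover have "K \<noteq> {}" using memK assms by blast
  moreover have "continuous_on K (\<lambda>w. \<Sum>i\<in>UNIV. \<bar>x i - w$i\<bar>)"
    by (intro continuous_intros)
  ultimately obtain w where w: "w \<in> K"
    and min: "\<And>w'. w' \<in> K \<Longrightarrow> (\<Sum>i\<in>UNIV. \<bar>x i - w$i\<bar>) \<le> (\<Sum>i\<in>UNIV. \<bar>x i - w'$i\<bar>)"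
    using continuous_attains_inf by meson
  show thesis
  proof (rule that[of "\<lambda>i. w$i"])
    show "(\<lambda>i. w$i) \<in> std_simplex" "matvec A (\<lambda>i. w$i) = u"
      using w memK[of "\<lambda>i. w$i"] by simp_all
    show "(\<Sum>i\<in>UNIV. \<bar>x i - w$i\<bar>) \<le> (\<Sum>i\<in>UNIV. \<bar>x i - z' i\<bar>)"
      if "z' \<in> std_simplex" "matvec A z' = u" for z'
      using min[of "\<chi> i. z' i"] memK[of z'] that by simp
  qed
qed

lemma std_simplex_pair_split:
  assumes x: "x \<in> std_simplex" and z: "z \<in> std_simplex" and "x \<noteq> z"
  obtains M t p q where "\<forall>i. 0 \<le> M i" "0 < t" "t \<le> 1" "p \<in> std_simplex" "q \<in> std_simplex"
    "x = (\<lambda>i. M i + t * p i)" "z = (\<lambda>i. M i + t * q i)" "(\<Sum>i\<in>UNIV. \<bar>x i - z i\<bar>) = 2 * t"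
proof -
  define M where "M i = min (x i) (z i)" for i
  define P where "P i = x i - M i" for i
  define Q where "Q i = z i - M i" for i
  define t where "t = sum P UNIV"
  have M0: "0 \<le> M i" and P0: "0 \<le> P i" and Q0: "0 \<le> Q i" for i
    using x z by (simp_all add: M_def P_def Q_def std_simplex_def)
  have sQ: "sum Q UNIV = t"
    using x z by (simp add: t_def P_def Q_def sum_subtractf std_simplex_def)
  have "0 < t"
  proof (rule ccontr)
    assume "\<not> 0 < t"
    moreover have "0 \<le> t" using P0 by (simp add: t_def sum_nonneg)
    ultimately have "sum P UNIV = 0" "sum Q UNIV = 0" using sQ by (simp_all add: t_def)
    then have "P i = 0" "Q i = 0" for i
      using P0 Q0 by (simp_all add: sum_nonneg_eq_0_iff)
    then have "x = z" by (auto simp: P_def Q_def)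
    then show False using \<open>x \<noteq> z\<close> by simp
  qed
  have "t \<le> 1"
    using x M0 by (simp add: t_def P_def sum_subtractf std_simplex_def sum_nonneg)
  show thesis
  proof (rule that[of M t "\<lambda>i. P i / t" "\<lambda>i. Q i / t"])
    show "\<forall>i. 0 \<le> M i" "0 < t" "t \<le> 1" using M0 \<open>0 < t\<close> \<open>t \<le> 1\<close> by auto
    show "(\<lambda>i. P i / t) \<in> std_simplex" "(\<lambda>i. Q i / t) \<in> std_simplex"
      using P0 Q0 sQ \<open>0 < t\<close> by (simp_all add: std_simplex_def t_def flip: sum_divide_distrib)
    show "x = (\<lambda>i. M i + t * (P i / t))" "z = (\<lambda>i. M i + t * (Q i / t))"
      using \<open>0 < t\<close> by (auto simp: P_def Q_def)
    have "\<bar>x i - z i\<bar> = P i + Q i" for i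
      by (auto simp: P_def Q_def M_def)
    then show "(\<Sum>i\<in>UNIV. \<bar>x i - z i\<bar>) = 2 * t"
      using sQ by (simp add: sum.distrib t_def)
  qed
qed

lemma l1_exchange_into_face:
  fixes A :: "'n::finite \<Rightarrow> (real^'m::finite) \<times> real"
  assumes G: "G face_of conv_mat A" and q_ri: "matvec A q \<in> rel_interior G" and "A i \<in> G"
    and t: "0 < t" and p: "p \<in> std_simplex" "0 < p i" and q: "q \<in> std_simplex"
    and M: "\<forall>j. 0 \<le> M j" and z: "z \<in> std_simplex" "z = (\<lambda>j. M j + t * q j)"
    and x: "x = (\<lambda>j. M j + t * p j)"
  obtains z' where "z' \<in> std_simplex" "matvec A z' = matvec A z"
    "(\<Sum>j\<in>UNIV. \<bar>x j - z' j\<bar>) < 2 * t"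
proof -
  obtain y d where "y \<in> G" and d: "0 < d" "d \<le> p i"
    and q_eq: "matvec A q = (1 - d) *\<^sub>R y + d *\<^sub>R A i"
    using rel_interior_as_convex_combination[OF face_of_imp_convex[OF G] q_ri \<open>A i \<in> G\<close> \<open>0 < p i\<close>] .
  obtain r where r: "r \<in> std_simplex" "matvec A r = y"
    using \<open>y \<in> G\<close> face_of_imp_subset[OF G] by (auto simp: conv_mat_eq_image)
  have "d \<le> 1" using d std_simplex_le_1[OF p(1), of i] by simp
  define e :: "'n \<Rightarrow> real" where "e = (\<lambda>j. if j = i then 1 else 0)"
  \<comment> \<open>new weights for the excess of \<open>z\<close>: same image as \<open>q\<close>, but mass \<open>d \<le> p i\<close> at \<open>i\<close>\<close>
  define w where "w = (\<lambda>j. (1 - d) * r j + d * e j)"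
  define z' where "z' = (\<lambda>j. M j + t * w j)"
  show thesis
  proof (rule that[of z'])
    have "0 \<le> w j" for j
      using r d \<open>d \<le> 1\<close> by (simp add: w_def e_def std_simplex_def)
    moreover have "sum w UNIV = 1"
      using r by (simp add: w_def e_def std_simplex_def sum.distrib flip: sum_distrib_left)
    ultimately show "z' \<in> std_simplex"
      using M t z q by (simp add: z'_def std_simplex_def sum.distrib flip: sum_distrib_left)
    have "matvec A w = matvec A q"
      unfolding w_def e_def by (simp add: matvec_add matvec_scale matvec_indicator r q_eq)
    then show "matvec A z' = matvec A z"
      by (simp add: z'_def z(2) matvec_add matvec_scale)
    have "\<bar>p j - w j\<bar> \<le> (p j - d * e j) + (1 - d) * r j" for j
    proof -
      have "0 \<le> p j - d * e j" using p d by (auto simp: e_def std_simplex_def)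
      moreover have "0 \<le> (1 - d) * r j" using \<open>d \<le> 1\<close> r by (simp add: std_simplex_def)
      ultimately show ?thesis unfolding w_def by arith
    qed
    then have "(\<Sum>j\<in>UNIV. \<bar>p j - w j\<bar>) \<le> (\<Sum>j\<in>UNIV. (p j - d * e j) + (1 - d) * r j)"
      by (rule sum_mono)
    also have "\<dots> = 2 * (1 - d)"
      using p r by (simp add: e_def std_simplex_def sum.distrib sum_subtractf flip: sum_distrib_left)
    finally have "t * (\<Sum>j\<in>UNIV. \<bar>p j - w j\<bar>) < 2 * t"
      using t d by (simp add: mult_le_cancel_left_pos)
    moreover have "\<bar>x j - z' j\<bar> = t * \<bar>p j - w j\<bar>" for j
      using t by (simp add: x z'_def abs_mult flip: right_diff_distrib)
    ultimately show "(\<Sum>j\<in>UNIV. \<bar>x j - z' j\<bar>) < 2 * t"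
      by (simp add: sum_distrib_left)
  qed
qed

lemma Phi_le_normv_face_to_outside:
  fixes A :: "'n::finite \<Rightarrow> (real^'m::finite) \<times> real"
  assumes N: "is_norm N" and G: "G face_of Fv A v" "b \<in> G" and p: "p \<in> std_simplex"
    and outside: "\<And>j. 0 < p j \<Longrightarrow> A j \<notin> G"
  shows "0 < Phi N v A" and "Phi N v A \<le> normv N v (matvec A p - b)"
proof -
  obtain j where "0 < p j"
  proof -
    have "sum p UNIV \<noteq> 0" using p by (simp add: std_simplex_def)
    then obtain j where "p j \<noteq> 0" by (meson sum.neutral)
    moreover have "0 \<le> p j" using p by (simp add: std_simplex_def)
    ultimately show thesis using that[of j] by linarith
  qed
  then have "G \<noteq> conv_mat A" using outside column_in_conv_mat by blast
  then have Phi: "0 < Phi N v A" "Phi N v A \<le> dist_v N v G (convex hull (A ` {j. A j \<notin> G}))"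
    using Phi_pos_le_dist_v[OF N G(1)] G(2) by auto
  then show "0 < Phi N v A" by simp
  have "matvec A p \<in> convex hull (A ` {j. A j \<notin> G})"
    using outside by (intro matvec_in_convex[OF convex_convex_hull p] hull_inc) auto
  then have "dist_v N v G (convex hull (A ` {j. A j \<notin> G})) \<le> normv N v (b - matvec A p)"
    by (rule dist_v_le[OF G(2)])
  also have "\<dots> = normv N v (matvec A p - b)"
    using normv_minus[OF N, of v "matvec A p - b"] by simp
  finally show "Phi N v A \<le> normv N v (matvec A p - b)"
    using Phi(2) by linarith
qed

lemma l1_nearest_preimage_bound:
  fixes A :: "'n::finite \<Rightarrow> (real^'m::finite) \<times> real"
  assumes N: "is_norm N" and u: "u \<in> Fv A v" and x: "x \<in> std_simplex"
    and z: "z \<in> std_simplex" "matvec A z = u"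
    and nearest: "\<And>z'. z' \<in> std_simplex \<Longrightarrow> matvec A z' = u \<Longrightarrow>
                   (\<Sum>i\<in>UNIV. \<bar>x i - z i\<bar>) \<le> (\<Sum>i\<in>UNIV. \<bar>x i - z' i\<bar>)"
  shows "(\<Sum>i\<in>UNIV. \<bar>x i - z i\<bar>) \<le> 2 * normv N v (matvec A x - u) / Phi N v A"
proof (cases "x = z")
  case True
  then show ?thesis using z by (simp add: normv_zero[OF N])
next
  case False
  obtain M t p q where M: "\<forall>i. 0 \<le> M i" and t: "0 < t" "t \<le> 1"
    and p: "p \<in> std_simplex" and q: "q \<in> std_simplex"
    and x_eq: "x = (\<lambda>i. M i + t * p i)" and z_eq: "z = (\<lambda>i. M i + t * q i)"
    and dist: "(\<Sum>i\<in>UNIV. \<bar>x i - z i\<bar>) = 2 * t"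
    using std_simplex_pair_split[OF x z(1) False] .
  have "matvec A q \<in> Fv A v"
  proof (rule matvec_in_convex[OF face_of_imp_convex[OF Fv_face_of_conv_mat] q])
    show "A j \<in> Fv A v" if "0 < q j" for j
      using Fv_support_columns[OF u z] that t M z_eq by (simp add: add_nonneg_pos)
  qed
  then obtain G where G: "G face_of Fv A v" "matvec A q \<in> rel_interior G"
    using polytope_point_in_rel_interior_face[OF polytope_Fv] by blast
  have outside: "A j \<notin> G" if pj: "0 < p j" for j
  proof
    assume "A j \<in> G"
    obtain z' where z': "z' \<in> std_simplex" "matvec A z' = matvec A z"
      and closer: "(\<Sum>i\<in>UNIV. \<bar>x i - z' i\<bar>) < 2 * t"
      using l1_exchange_into_face[OF face_of_trans[OF G(1) Fv_face_of_conv_mat] G(2)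
          \<open>A j \<in> G\<close> t(1) p(1) pj q M z(1) z_eq x_eq] .
    show False
      using nearest[OF z'(1)] z'(2) closer dist by (simp add: z(2))
  qed
  have Phi: "0 < Phi N v A" "Phi N v A \<le> normv N v (matvec A p - matvec A q)"
    using Phi_le_normv_face_to_outside[OF N G(1) _ p outside] G(2) rel_interior_subset by blast+
  then have "t * Phi N v A \<le> t * normv N v (matvec A p - matvec A q)"
    using t by simp
  also have "\<dots> \<le> normv N v (t *\<^sub>R (matvec A p - matvec A q))"
    using mult_normv_le_normv_scale[OF N] t by simp
  also have "t *\<^sub>R (matvec A p - matvec A q) = matvec A x - u"
    using z(2) by (simp add: x_eq z_eq matvec_add matvec_scale algebra_simps)
  finally show ?thesis
    using dist Phi(1) by (simp add: pos_le_divide_eq)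
qed

theorem lemma2:
  fixes N :: "real^'m \<Rightarrow> real" and v :: "real^'m"
    and A :: "'n::finite \<Rightarrow> (real^'m::finite) \<times> real"
    and u :: "(real^'m::finite) \<times> real" and x :: "'n \<Rightarrow> real"
  assumes "is_norm N"
    and "\<exists>i j. A i \<noteq> A j"
    and "u \<in> Fv A v"
    and "x \<in> std_simplex"
  shows "Inf {(\<Sum>i\<in>UNIV. \<bar>x i - z i\<bar>) | z. z \<in> std_simplex \<and> matvec A z = u}
           \<le> 2 * normv N v (matvec A x - u) / Phi N v A"
proof -
  have "u \<in> conv_mat A" using assms(3) unfolding Fv_def by blast
  then obtain z0 where "z0 \<in> std_simplex" "matvec A z0 = u"
    by (auto simp: conv_mat_eq_image)
  then obtain z where z: "z \<in> std_simplex" "matvec A z = u"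
    and nearest: "\<And>z'. z' \<in> std_simplex \<Longrightarrow> matvec A z' = u \<Longrightarrow>
                   (\<Sum>i\<in>UNIV. \<bar>x i - z i\<bar>) \<le> (\<Sum>i\<in>UNIV. \<bar>x i - z' i\<bar>)"
    using exists_l1_nearest_preimage[where x = x] by blast
  have "Inf {(\<Sum>i\<in>UNIV. \<bar>x i - z i\<bar>) | z. z \<in> std_simplex \<and> matvec A z = u}
          \<le> (\<Sum>i\<in>UNIV. \<bar>x i - z i\<bar>)"
    using z by (intro cInf_lower) (auto intro: bdd_belowI[where m=0])
  also have "\<dots> \<le> 2 * normv N v (matvec A x - u) / Phi N v A"
    using l1_nearest_preimage_bound[OF assms(1,3,4) z nearest] .
  finally show ?thesis .
qed

end
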